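(* Let $s,t\geq 0$ and let $\{\varphi_n\}_{n\in\mathbb{N}}$ be a sequence of elements of $\mathcal{S}^{s}_{t}(\mathbb{R}^d)$. Then $\{\varphi_n\}$ converges in $\mathcal{S}^{s}_{t}(\mathbb{R}^d)$ if and only if $\{\varphi_n\}$ is bounded in $\mathcal{S}^{s}_{t}(\mathbb{R}^d)$ and it converges pointwise on $\mathbb{R}^d$.
   Context: For $s,t\geq 0$, the Gelfand-Shilov space $\mathcal{S}^{s}_{t}(\mathbb{R}^d)$ is the set of $\varphi\in\mathcal{S}(\mathbb{R}^d)$ for which there is $h>0$ with $p_h^{s,t}(\varphi)=\sup_{x\in\mathbb{R}^d,\alpha,\beta\in\mathbb{N}^d}\frac{h^{|\alpha+\beta|}}{\alpha!^{t}\beta!^{s}}|x^\alpha\partial^\beta\varphi(x)|<\infty$; it carries the inductive limit topology defined by these norms (as $h\to 0^+$). *)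

theory Defs
  imports "HOL-Analysis.Analysis"
begin

text \<open>Functions on R^d are modelled as maps real^'n \<Rightarrow> complex, with 'n a finite index type
  (d = CARD('n)). Multi-indices are maps 'n \<Rightarrow> nat.\<close>

type_synonym 'n mindex = "'n \<Rightarrow> nat"

definition mi_abs :: "'n::finite mindex \<Rightarrow> nat" where
  "mi_abs \<alpha> = (\<Sum>i\<in>UNIV. \<alpha> i)"

definition mi_fact :: "'n::finite mindex \<Rightarrow> real" where
  "mi_fact \<alpha> = (\<Prod>i\<in>UNIV. fact (\<alpha> i))"

definition mi_pow :: "real^'n::finite \<Rightarrow> 'n mindex \<Rightarrow> real" where
  "mi_pow x \<alpha> = (\<Prod>i\<in>UNIV. (x $ i) ^ (\<alpha> i))"

definition pder :: "'n::finite \<Rightarrow> (real^'n \<Rightarrow> complex) \<Rightarrow> (real^'n \<Rightarrow> complex)" where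
  "pder i f = (\<lambda>x. frechet_derivative f (at x) (axis i 1))"

definition idx_list :: "'n::finite list" where
  "idx_list = (SOME xs. distinct xs \<and> set xs = UNIV)"

text \<open>Higher partial derivative \<partial>^\<beta> (for smooth functions the order is irrelevant).\<close>
definition Dpart :: "'n::finite mindex \<Rightarrow> (real^'n \<Rightarrow> complex) \<Rightarrow> (real^'n \<Rightarrow> complex)" where
  "Dpart \<beta> f = foldr (\<lambda>i g. (pder i ^^ \<beta> i) g) idx_list f"

definition smooth_fun :: "(real^'n::finite \<Rightarrow> complex) \<Rightarrow> bool" where
  "smooth_fun f \<longleftrightarrow> (\<forall>\<beta> x. Dpart \<beta> f differentiable (at x))"

definition schwartz :: "(real^'n::finite \<Rightarrow> complex) set" where
  "schwartz = {f. smooth_fun f \<and>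
     (\<forall>\<alpha> \<beta>. \<exists>C. \<forall>x. norm (of_real (mi_pow x \<alpha>) * Dpart \<beta> f x) \<le> C)}"

definition GS_term :: "real \<Rightarrow> real \<Rightarrow> real \<Rightarrow> (real^'n::finite \<Rightarrow> complex)
    \<Rightarrow> real^'n \<Rightarrow> 'n mindex \<Rightarrow> 'n mindex \<Rightarrow> real" where
  "GS_term s t h \<phi> x \<alpha> \<beta> =
     h ^ (mi_abs \<alpha> + mi_abs \<beta>) / (mi_fact \<alpha> powr t * mi_fact \<beta> powr s)
       * norm (of_real (mi_pow x \<alpha>) * Dpart \<beta> \<phi> x)"

definition GS_finite :: "real \<Rightarrow> real \<Rightarrow> real \<Rightarrow> (real^'n::finite \<Rightarrow> complex) \<Rightarrow> bool" where
  "GS_finite s t h \<phi> \<longleftrightarrow> (\<exists>C. \<forall>x \<alpha> \<beta>. GS_term s t h \<phi> x \<alpha> \<beta> \<le> C)"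

text \<open>The norm p_h^{s,t} (meaningful when GS_finite s t h \<phi>).\<close>
definition GS_norm :: "real \<Rightarrow> real \<Rightarrow> real \<Rightarrow> (real^'n::finite \<Rightarrow> complex) \<Rightarrow> real" where
  "GS_norm s t h \<phi> = (SUP (x, \<alpha>, \<beta>)\<in>UNIV. GS_term s t h \<phi> x \<alpha> \<beta>)"

definition GS :: "real \<Rightarrow> real \<Rightarrow> (real^'n::finite \<Rightarrow> complex) set" where
  "GS s t = {\<phi>. \<phi> \<in> schwartz \<and> (\<exists>h>0. GS_finite s t h \<phi>)}"

text \<open>Continuous seminorms for the (locally convex) inductive limit topology:
  exactly the seminorms on S^s_t whose restriction to every step space
  {\<phi>. p_h(\<phi>) < \<infinity>} is continuous for p_h. These seminorms generate the
  inductive limit topology.\<close>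
definition GS_cont_seminorm :: "real \<Rightarrow> real \<Rightarrow> ((real^'n::finite \<Rightarrow> complex) \<Rightarrow> real) \<Rightarrow> bool" where
  "GS_cont_seminorm s t q \<longleftrightarrow>
     (\<forall>\<phi>\<in>GS s t. 0 \<le> q \<phi>) \<and>
     (\<forall>\<phi>\<in>GS s t. \<forall>\<psi>\<in>GS s t. q (\<lambda>x. \<phi> x + \<psi> x) \<le> q \<phi> + q \<psi>) \<and>
     (\<forall>\<phi>\<in>GS s t. \<forall>c::complex. q (\<lambda>x. c * \<phi> x) = norm c * q \<phi>) \<and>
     (\<forall>h>0. \<exists>C. \<forall>\<phi>\<in>GS s t. GS_finite s t h \<phi> \<longrightarrow> q \<phi> \<le> C * GS_norm s t h \<phi>)"

definition GS_converges :: "real \<Rightarrow> real \<Rightarrow> (nat \<Rightarrow> real^'n::finite \<Rightarrow> complex) \<Rightarrow> bool" where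
  "GS_converges s t \<phi>s \<longleftrightarrow>
     (\<exists>\<phi>\<in>GS s t. \<forall>q. GS_cont_seminorm s t q \<longrightarrow>
        (\<lambda>n. q (\<lambda>x. \<phi>s n x - \<phi> x)) \<longlonglongrightarrow> 0)"

definition GS_bounded :: "real \<Rightarrow> real \<Rightarrow> (nat \<Rightarrow> real^'n::finite \<Rightarrow> complex) \<Rightarrow> bool" where
  "GS_bounded s t \<phi>s \<longleftrightarrow>
     (\<forall>q. GS_cont_seminorm s t q \<longrightarrow> (\<exists>M. \<forall>n. q (\<phi>s n) \<le> M))"

end

theory Submission
  imports Defs
begin

text \<open>
  Point evaluation is a continuous seminorm, as \<open>|\<phi> x| \<le> p\<^sub>h \<phi>\<close>, and continuous seminorms
  are bounded along convergent sequences; this gives one direction.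

  Conversely, a bounded sequence is bounded in a single step space: otherwise, for
  \<open>h\<^sub>k = 1/(k+1)\<close> some term of \<open>p\<^bsub>h\<^sub>k\<^esub> (\<phi>\<^sub>n)\<close> exceeds \<open>k\<close>, and the supremum over \<open>k\<close>
  of these terms is a continuous seminorm that is unbounded on the sequence. A bound
  \<open>p\<^sub>h (\<phi>\<^sub>n) \<le> M\<close> makes the \<open>\<phi>\<^sub>n\<close> equi-Lipschitz and uniformly small where some \<open>|x\<^sub>i|\<close>
  is large, so pointwise convergence is uniform. A second order Taylor estimate along
  coordinate lines passes uniform convergence from \<open>\<partial>\<^sup>\<gamma> \<phi>\<^sub>n\<close> to \<open>\<partial>\<^sub>j \<partial>\<^sup>\<gamma> \<phi>\<^sub>n\<close>, hence the
  limit \<open>\<phi>\<close> is smooth with \<open>\<partial>\<^sup>\<beta> \<phi> = lim \<partial>\<^sup>\<beta> \<phi>\<^sub>n\<close> and \<open>p\<^sub>h \<phi> \<le> M\<close>. Finally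
  \<open>p\<^bsub>h/2\<^esub> (\<phi>\<^sub>n - \<phi>) \<rightarrow> 0\<close>: the terms with \<open>|\<alpha>| + |\<beta>| \<ge> m\<close> are at most \<open>2\<^sup>-\<^sup>m 2M\<close>,
  and each of the finitely many others tends to zero uniformly in \<open>x\<close>, by uniform
  convergence on a box and decay outside it.
\<close>

section \<open>Multi-indices and partial derivatives\<close>

definition mi_inc :: "'n mindex \<Rightarrow> 'n \<Rightarrow> 'n mindex" where
  "mi_inc \<gamma> j = \<gamma>(j := Suc (\<gamma> j))"

lemma mi_abs_zero [simp]: "mi_abs (\<lambda>_. 0) = 0"
  by (simp add: mi_abs_def)

lemma mi_fact_zero [simp]: "mi_fact (\<lambda>_. 0) = 1"
  by (simp add: mi_fact_def)

lemma mi_pow_zero [simp]: "mi_pow x (\<lambda>_. 0) = 1"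
  by (simp add: mi_pow_def)

lemma mi_fact_ge_1: "mi_fact \<alpha> \<ge> 1"
  unfolding mi_fact_def by (rule prod_ge_1) simp

lemma mi_abs_mi_inc: "mi_abs (mi_inc \<gamma> j) = Suc (mi_abs \<gamma>)"
proof -
  have "mi_abs (mi_inc \<gamma> j) = (\<Sum>k\<in>UNIV. \<gamma> k + (if k = j then 1 else 0))"
    unfolding mi_abs_def mi_inc_def by (intro sum.cong) auto
  then show ?thesis by (simp add: sum.distrib mi_abs_def)
qed

lemma mi_le_abs: "\<alpha> i \<le> mi_abs \<alpha>"
  unfolding mi_abs_def by (rule member_le_sum) auto

lemma mi_pow_add2: "mi_pow x (\<alpha>(i := \<alpha> i + 2)) = mi_pow x \<alpha> * (x$i)\<^sup>2"
proof -
  have "mi_pow x (\<alpha>(i := \<alpha> i + 2)) = (\<Prod>k\<in>UNIV. (x$k) ^ \<alpha> k * (if k = i then (x$k)\<^sup>2 else 1))"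
    unfolding mi_pow_def by (intro prod.cong) (auto simp: power_add power2_eq_square)
  then show ?thesis by (simp add: mi_pow_def prod.distrib)
qed

lemma mi_pow_box: "(\<And>i. \<bar>x$i\<bar> \<le> R) \<Longrightarrow> \<bar>mi_pow x \<alpha>\<bar> \<le> R ^ mi_abs \<alpha>"
  unfolding mi_pow_def mi_abs_def abs_prod power_abs power_sum
  by (intro prod_mono conjI power_mono) auto

lemma pder_eq_derivative: "(f has_derivative f') (at x) \<Longrightarrow> pder j f x = f' (axis j 1)"
  unfolding pder_def using frechet_derivative_at by metis

lemma sum_axis_of_real [simp]:
  "(\<Sum>k\<in>UNIV. of_real (axis j (1::real) $ k) * c k) = (c j :: complex)"
proof -
  have "(\<Sum>k\<in>UNIV. of_real (axis j (1::real) $ k) * c k) = (\<Sum>k\<in>UNIV. if k = j then c k else 0)"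
    by (intro sum.cong) (auto simp: axis_def)
  then show ?thesis by simp
qed

lemma derivative_eq_sum_pder:
  fixes f :: "real^'n::finite \<Rightarrow> complex"
  assumes "(f has_derivative f') (at x)"
  shows "f' v = (\<Sum>j\<in>UNIV. of_real (v$j) * pder j f x)"
proof -
  have lin: "linear f'" using assms has_derivative_linear by blast
  have "f' v = f' (\<Sum>j\<in>UNIV. (v$j) *\<^sub>R axis j 1)"
    using basis_expansion[of v] by (simp add: scalar_mult_eq_scaleR)
  also have "\<dots> = (\<Sum>j\<in>UNIV. (v$j) *\<^sub>R f' (axis j 1))"
    by (simp add: linear_sum[OF lin] linear_scale[OF lin])
  finally show ?thesis by (simp add: pder_eq_derivative[OF assms] scaleR_conv_of_real)
qed

lemma norm_sum_of_real_component_le: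
  fixes c :: "'n::finite \<Rightarrow> complex"
  assumes "\<And>j. norm (c j) \<le> B"
  shows "norm (\<Sum>j\<in>UNIV. of_real (v$j) * c j) \<le> real CARD('n) * B * norm v"
proof -
  have "norm (\<Sum>j\<in>UNIV. of_real (v$j) * c j) \<le> (\<Sum>j\<in>(UNIV :: 'n set). norm v * B)"
    by (rule order_trans[OF norm_sum sum_mono])
      (auto simp: norm_mult intro!: mult_mono component_le_norm_cart assms)
  then show ?thesis by (simp add: algebra_simps)
qed

lemma distinct_idx_list: "distinct (idx_list :: 'n::finite list)"
  and set_idx_list [simp]: "set (idx_list :: 'n::finite list) = UNIV"
proof -
  have "\<exists>xs::'n list. distinct xs \<and> set xs = UNIV"
    using finite_distinct_list[of "UNIV :: 'n set"] by auto
  then have "distinct (idx_list :: 'n list) \<and> set (idx_list :: 'n list) = UNIV"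
    unfolding idx_list_def by (rule someI_ex)
  then show "distinct (idx_list :: 'n list)" "set (idx_list :: 'n list) = UNIV" by auto
qed

lemma Dpart_zero [simp]: "Dpart (\<lambda>_. 0) f = f"
proof -
  have "foldr (\<lambda>i. id) xs f = f" for xs :: "'a list" by (induction xs) auto
  then show ?thesis unfolding Dpart_def by simp
qed

lemma Dpart_pder_closed_family:
  assumes G: "\<And>\<gamma> j. pder j (G \<gamma>) = G (mi_inc \<gamma> j)"
  shows "Dpart \<beta> (G \<gamma>) = G (\<lambda>i. \<gamma> i + \<beta> i)"
proof -
  have funpow: "(pder j ^^ k) (G \<gamma>) = G (\<gamma>(j := \<gamma> j + k))" for j k \<gamma>
    by (induction k) (auto simp: G mi_inc_def intro!: arg_cong[where f = G])
  have "distinct xs \<Longrightarrow>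
      foldr (\<lambda>i g. (pder i ^^ \<beta> i) g) xs (G \<gamma>) = G (\<lambda>i. if i \<in> set xs then \<gamma> i + \<beta> i else \<gamma> i)"
    for xs
  proof (induction xs)
    case (Cons i ys)
    then show ?case by (simp add: funpow) (auto intro!: arg_cong[where f = G])
  qed simp
  from this[OF distinct_idx_list] show ?thesis by (simp add: Dpart_def)
qed

section \<open>Symmetry of mixed partial derivatives\<close>

lemma line_increment_linearization:
  fixes F :: "'a::real_normed_vector \<Rightarrow> 'b::real_normed_vector"
  assumes der: "\<And>s. (F has_derivative F' s) (at (x + s *\<^sub>R v))"
    and bnd: "\<And>s. \<bar>s\<bar> \<le> \<bar>t\<bar> \<Longrightarrow> norm (F' s v - c) \<le> K"
  shows "norm (F (x + t *\<^sub>R v) - F x - t *\<^sub>R c) \<le> K * \<bar>t\<bar>"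
proof -
  define g where "g s = F (x + s *\<^sub>R v) - s *\<^sub>R c" for s :: real
  have "(g has_derivative (\<lambda>u. u *\<^sub>R (F' s v - c))) (at s within S)" for s S
  proof -
    have lin: "linear (F' s)" using der has_derivative_linear by blast
    have "((F \<circ> (\<lambda>s. x + s *\<^sub>R v)) has_derivative (F' s \<circ> (\<lambda>u. u *\<^sub>R v))) (at s within S)"
      by (rule diff_chain_within[of "\<lambda>s. x + s *\<^sub>R v" _ s S F "F' s", OF _ has_derivative_at_withinI[OF der]])
        (auto intro!: derivative_eq_intros)
    then show ?thesis
      unfolding g_def by (auto intro!: derivative_eq_intros simp: o_def linear_scale[OF lin] scaleR_diff_right)
  qed
  moreover have "onorm (\<lambda>u. u *\<^sub>R (F' s v - c)) \<le> K" if "s \<in> {-\<bar>t\<bar>..\<bar>t\<bar>}" for s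
    using that bnd[of s] by (simp add: onorm_scaleR_left onorm_id abs_le_iff)
  ultimately have "norm (g t - g 0) \<le> K * norm (t - 0)"
    by (intro differentiable_bound[where S = "{-\<bar>t\<bar>..\<bar>t\<bar>}"]) auto
  then show ?thesis by (simp add: g_def algebra_simps)
qed

lemma has_derivative_increment_le:
  fixes P :: "'a::real_normed_vector \<Rightarrow> 'b::real_normed_vector"
  assumes "(P has_derivative A) (at x)" and "e > 0"
  shows "\<exists>d>0. \<forall>y (w :: 'a). norm (y - x) + norm w < d \<longrightarrow>
    norm (P (y + w) - P y - A w) \<le> e * (2 * norm (y - x) + norm w)"
proof -
  obtain d where "d > 0" and d: "\<And>z. norm (z - x) < d \<Longrightarrow> norm (P z - P x - A (z - x)) \<le> e * norm (z - x)"
    using assms unfolding has_derivative_at_alt by blast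
  have lin: "linear A" using assms(1) has_derivative_linear by blast
  show ?thesis
  proof (intro exI[of _ d] conjI allI impI \<open>d > 0\<close>)
    fix y w :: 'a assume yw: "norm (y - x) + norm w < d"
    have yw': "norm (y + w - x) \<le> norm (y - x) + norm w"
      using norm_triangle_ineq[of "y - x" w] by (simp add: algebra_simps)
    then have "norm (P (y + w) - P x - A (y + w - x)) \<le> e * norm (y + w - x)"
      using yw by (intro d) linarith
    also have "\<dots> \<le> e * (norm (y - x) + norm w)"
      using yw' \<open>e > 0\<close> by (intro mult_left_mono) auto
    finally have "norm (P (y + w) - P x - A (y + w - x)) \<le> e * (norm (y - x) + norm w)" .
    moreover have "norm (P y - P x - A (y - x)) \<le> e * norm (y - x)"
      using yw norm_ge_zero[of w] by (intro d) linarith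
    moreover have "P (y + w) - P y - A w = (P (y + w) - P x - A (y + w - x)) - (P y - P x - A (y - x))"
      by (simp add: linear_diff[OF lin] linear_add[OF lin] algebra_simps)
    ultimately show "norm (P (y + w) - P y - A w) \<le> e * (2 * norm (y - x) + norm w)"
      using norm_triangle_ineq4[of "P (y + w) - P x - A (y + w - x)" "P y - P x - A (y - x)"]
      by (simp add: algebra_simps)
  qed
qed

lemma second_difference_pder_pder:
  fixes f :: "real^'n::finite \<Rightarrow> complex"
  assumes df: "\<And>y. f differentiable (at y)" and di: "pder i f differentiable (at x)" and e: "e > 0"
  shows "\<exists>d>0. \<forall>h. \<bar>h\<bar> < d \<longrightarrow>
    norm (f (x + h *\<^sub>R axis i 1 + h *\<^sub>R axis j 1) - f (x + h *\<^sub>R axis i 1) - f (x + h *\<^sub>R axis j 1) + f x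
      - (h * h) *\<^sub>R pder j (pder i f) x) \<le> 3 * e * (h * h)"
proof -
  define P where "P = pder i f"
  define A where "A = frechet_derivative P (at x)"
  have PA: "(P has_derivative A) (at x)"
    using di unfolding P_def A_def by (simp add: frechet_derivative_works)
  obtain d where "d > 0"
    and d: "\<And>y w. norm (y - x) + norm w < d \<Longrightarrow> norm (P (y + w) - P y - A w) \<le> e * (2 * norm (y - x) + norm w)"
    using has_derivative_increment_le[OF PA e] by auto
  have fd: "\<And>y. (f has_derivative frechet_derivative f (at y)) (at y)"
    using df frechet_derivative_works by blast
  show ?thesis
  proof (intro exI[of _ "d/2"] conjI allI impI)
    fix h :: real assume h: "\<bar>h\<bar> < d/2"
    define y where "y s = x + s *\<^sub>R axis i 1" for s
    define F where "F z = f (z + h *\<^sub>R axis j 1) - f z" for z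
    define F' where "F' s = (\<lambda>w. frechet_derivative f (at (y s + h *\<^sub>R axis j 1)) w - frechet_derivative f (at (y s)) w)" for s
    have "(F has_derivative F' s) (at (y s))" for s
    proof -
      have "((f \<circ> (\<lambda>z. z + h *\<^sub>R axis j 1)) has_derivative
          (frechet_derivative f (at (y s + h *\<^sub>R axis j 1)) \<circ> (\<lambda>z. z))) (at (y s))"
        by (rule diff_chain_at[OF _ fd]) (auto intro!: derivative_eq_intros)
      then show ?thesis unfolding F_def F'_def o_def by (intro has_derivative_diff fd)
    qed
    moreover have "norm (F' s (axis i 1) - h *\<^sub>R pder j P x) \<le> 3 * e * \<bar>h\<bar>" if s: "\<bar>s\<bar> \<le> \<bar>h\<bar>" for s
    proof -
      have "F' s (axis i 1) - h *\<^sub>R pder j P x = P (y s + h *\<^sub>R axis j 1) - P (y s) - A (h *\<^sub>R axis j 1)"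
        using pder_eq_derivative[OF PA, of j] has_derivative_linear[OF PA]
        by (simp add: F'_def P_def pder_def linear_scale)
      also have "norm \<dots> \<le> e * (2 * \<bar>s\<bar> + \<bar>h\<bar>)"
        using d[of "y s" "h *\<^sub>R axis j 1"] s h by (simp add: y_def)
      also have "\<dots> \<le> 3 * e * \<bar>h\<bar>" using s e by (simp add: algebra_simps)
      finally show ?thesis .
    qed
    ultimately have "norm (F (y h) - F x - h *\<^sub>R (h *\<^sub>R pder j P x)) \<le> (3 * e * \<bar>h\<bar>) * \<bar>h\<bar>"
      unfolding y_def by (rule line_increment_linearization)
    then show "norm (f (x + h *\<^sub>R axis i 1 + h *\<^sub>R axis j 1) - f (x + h *\<^sub>R axis i 1) - f (x + h *\<^sub>R axis j 1) + f x
      - (h * h) *\<^sub>R pder j (pder i f) x) \<le> 3 * e * (h * h)"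
      by (simp add: F_def P_def y_def abs_mult_self algebra_simps)
  qed (simp add: \<open>d > 0\<close>)
qed

lemma pder_pder_commute:
  fixes f :: "real^'n::finite \<Rightarrow> complex"
  assumes df: "\<And>y. f differentiable (at y)"
    and di: "pder i f differentiable (at x)" and dj: "pder j f differentiable (at x)"
  shows "pder j (pder i f) x = pder i (pder j f) x"
proof -
  let ?a = "pder j (pder i f) x" and ?b = "pder i (pder j f) x"
  have key: "norm (?a - ?b) \<le> 6 * e" if e: "e > 0" for e
  proof -
    define D where "D h = f (x + h *\<^sub>R axis i 1 + h *\<^sub>R axis j 1) - f (x + h *\<^sub>R axis i 1)
      - f (x + h *\<^sub>R axis j 1) + f x" for h
    have D_sym: "D h = f (x + h *\<^sub>R axis j 1 + h *\<^sub>R axis i 1) - f (x + h *\<^sub>R axis j 1)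
      - f (x + h *\<^sub>R axis i 1) + f x" for h
      unfolding D_def by (simp add: algebra_simps)
    obtain d1 where "d1 > 0" and d1: "\<And>h. \<bar>h\<bar> < d1 \<Longrightarrow> norm (D h - (h * h) *\<^sub>R ?a) \<le> 3 * e * (h * h)"
      using second_difference_pder_pder[OF df di e, of j] unfolding D_def by blast
    obtain d2 where "d2 > 0" and d2: "\<And>h. \<bar>h\<bar> < d2 \<Longrightarrow> norm (D h - (h * h) *\<^sub>R ?b) \<le> 3 * e * (h * h)"
      using second_difference_pder_pder[OF df dj e, of i] unfolding D_sym by blast
    define h where "h = min d1 d2 / 2"
    have h: "h > 0" "\<bar>h\<bar> < d1" "\<bar>h\<bar> < d2" using \<open>d1 > 0\<close> \<open>d2 > 0\<close> by (auto simp: h_def)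
    have "(h * h) * norm (?a - ?b) = norm ((D h - (h * h) *\<^sub>R ?b) - (D h - (h * h) *\<^sub>R ?a))"
      using h by (simp add: algebra_simps flip: scaleR_diff_right)
    also have "\<dots> \<le> 3 * e * (h * h) + 3 * e * (h * h)"
      by (rule order_trans[OF norm_triangle_ineq4 add_mono[OF d2[OF h(3)] d1[OF h(2)]]])
    finally show ?thesis using h by simp
  qed
  have "norm (?a - ?b) \<le> 0 + e" if "e > 0" for e
    using key[of "e / 6"] that by simp
  then have "norm (?a - ?b) \<le> 0" by (rule field_le_epsilon)
  then show ?thesis by simp
qed

text \<open>
  \<open>Dpart\<close> applies the factors \<open>pder i ^^ \<beta> i\<close> in the order of \<open>idx_list\<close>;
  \<open>Dpart_list\<close> is the same product over a suffix of that list. Lemma \<open>pder_Dpart_list\<close>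
  moves \<open>pder j\<close> through the factors one at a time by Schwarz's theorem, which applies because
  every intermediate function is again a \<open>Dpart\<close> of a smooth function.
\<close>

definition Dpart_list :: "'n::finite list \<Rightarrow> 'n mindex \<Rightarrow> (real^'n \<Rightarrow> complex) \<Rightarrow> real^'n \<Rightarrow> complex" where
  "Dpart_list xs \<gamma> f = foldr (\<lambda>i g. (pder i ^^ \<gamma> i) g) xs f"

lemma Dpart_list_Cons: "Dpart_list (i # xs) \<gamma> f = (pder i ^^ \<gamma> i) (Dpart_list xs \<gamma> f)"
  by (simp add: Dpart_list_def)

lemma Dpart_list_cong: "(\<And>i. i \<in> set xs \<Longrightarrow> \<gamma> i = \<delta> i) \<Longrightarrow> Dpart_list xs \<gamma> f = Dpart_list xs \<delta> f"
  unfolding Dpart_list_def by (rule foldr_cong) auto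

lemma Dpart_list_suffix:
  assumes "idx_list = us @ xs"
  shows "Dpart_list xs \<gamma> f = Dpart (\<lambda>i. if i \<in> set xs then \<gamma> i else 0) f"
proof -
  have "set us \<inter> set xs = {}" using distinct_idx_list assms by (metis distinct_append)
  then have "foldr (\<lambda>i g. (pder i ^^ (if i \<in> set xs then \<gamma> i else 0)) g) us g = g" for g
    by (induction us) auto
  moreover have "Dpart_list xs (\<lambda>i. if i \<in> set xs then \<gamma> i else 0) f = Dpart_list xs \<gamma> f"
    by (rule Dpart_list_cong) simp
  ultimately show ?thesis by (simp add: Dpart_def assms Dpart_list_def)
qed

lemma pder_Dpart_list:
  assumes sm: "smooth_fun f"
  shows "idx_list = us @ xs \<Longrightarrow> j \<in> set xs \<Longrightarrow> pder j (Dpart_list xs \<gamma> f) = Dpart_list xs (mi_inc \<gamma> j) f"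
proof (induction xs arbitrary: us \<gamma>)
  case (Cons i ys)
  have us: "idx_list = (us @ [i]) @ ys" using Cons.prems by simp
  have i: "i \<notin> set ys" using distinct_idx_list Cons.prems(1) by (metis distinct.simps(2) distinct_append)
  have diff: "Dpart_list (i # ys) \<delta> f differentiable (at y)" for \<delta> y
    using sm Cons.prems(1) by (simp add: Dpart_list_suffix smooth_fun_def del: Dpart_list_Cons)
  have "Dpart_list ys (\<delta>(i := k)) f = Dpart_list ys \<delta> f" for k \<delta>
    using i by (intro Dpart_list_cong) auto
  then have pow: "(pder i ^^ k) (Dpart_list ys \<delta> f) = Dpart_list (i # ys) (\<delta>(i := k)) f" for k \<delta>
    by (simp add: Dpart_list_Cons)
  show ?case
  proof (cases "j = i")
    case True
    have "pder j (Dpart_list (i # ys) \<gamma> f) = (pder i ^^ Suc (\<gamma> i)) (Dpart_list ys \<gamma> f)"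
      using True by (simp add: Dpart_list_Cons)
    also have "\<dots> = Dpart_list (i # ys) (mi_inc \<gamma> j) f"
      using pow[of "Suc (\<gamma> i)" \<gamma>] True by (simp only: mi_inc_def)
    finally show ?thesis .
  next
    case False
    then have IH: "pder j (Dpart_list ys \<delta> f) = Dpart_list ys (mi_inc \<delta> j) f" for \<delta>
      using Cons by (intro Cons.IH[OF us]) auto
    have pow_commute: "pder j ((pder i ^^ k) (Dpart_list ys \<gamma> f)) = (pder i ^^ k) (Dpart_list ys (mi_inc \<gamma> j) f)" for k
    proof (induction k)
      case (Suc k)
      define X where "X = (pder i ^^ k) (Dpart_list ys \<gamma> f)"
      have "X = Dpart_list (i # ys) (\<gamma>(i := k)) f" by (simp add: X_def pow)
      moreover have "pder i X = Dpart_list (i # ys) (\<gamma>(i := Suc k)) f" by (simp add: X_def flip: pow)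
      moreover have "pder j X = Dpart_list (i # ys) ((mi_inc \<gamma> j)(i := k)) f" unfolding X_def Suc.IH by (rule pow)
      ultimately have "pder j (pder i X) = pder i (pder j X)"
        by (intro ext pder_pder_commute) (simp_all only: diff)
      then show ?case by (simp add: X_def Suc.IH)
    qed (simp add: IH)
    moreover have "mi_inc \<gamma> j i = \<gamma> i" using False by (simp add: mi_inc_def)
    ultimately show ?thesis by (simp only: Dpart_list_Cons)
  qed
qed simp

lemma pder_Dpart: "smooth_fun f \<Longrightarrow> pder j (Dpart \<gamma> f) = Dpart (mi_inc \<gamma> j) f"
  using pder_Dpart_list[of f "[]" idx_list j \<gamma>] by (simp add: Dpart_def Dpart_list_def)

lemma Dpart_has_derivative:
  assumes "smooth_fun f"
  shows "(Dpart \<gamma> f has_derivative (\<lambda>v. \<Sum>j\<in>UNIV. of_real (v$j) * Dpart (mi_inc \<gamma> j) f x)) (at x)"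
proof -
  have d: "(Dpart \<gamma> f has_derivative frechet_derivative (Dpart \<gamma> f) (at x)) (at x)"
    using assms frechet_derivative_works unfolding smooth_fun_def by blast
  also have "frechet_derivative (Dpart \<gamma> f) (at x) = (\<lambda>v. \<Sum>j\<in>UNIV. of_real (v$j) * Dpart (mi_inc \<gamma> j) f x)"
    using derivative_eq_sum_pder[OF d] pder_Dpart[OF assms] by (intro ext) simp
  finally show ?thesis .
qed

lemma Dpart_lincomb:
  assumes f: "smooth_fun f" and g: "smooth_fun g"
  shows "Dpart \<beta> (\<lambda>x. a * f x + b * g x) = (\<lambda>x. a * Dpart \<beta> f x + b * Dpart \<beta> g x)"
    and "smooth_fun (\<lambda>x. a * f x + b * g x)"
proof -
  define G where "G \<gamma> x = a * Dpart \<gamma> f x + b * Dpart \<gamma> g x" for \<gamma> x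
  have G': "(G \<gamma> has_derivative (\<lambda>v. a * (\<Sum>j\<in>UNIV. of_real (v$j) * Dpart (mi_inc \<gamma> j) f x)
      + b * (\<Sum>j\<in>UNIV. of_real (v$j) * Dpart (mi_inc \<gamma> j) g x))) (at x)" for \<gamma> x
    unfolding G_def by (intro has_derivative_add has_derivative_mult_right Dpart_has_derivative f g)
  have "pder j (G \<gamma>) = G (mi_inc \<gamma> j)" for \<gamma> j
    by (rule ext) (simp add: pder_eq_derivative[OF G'] G_def)
  moreover have "G (\<lambda>_. 0) = (\<lambda>x. a * f x + b * g x)"
    by (rule ext) (simp add: G_def)
  ultimately have DG: "Dpart \<beta> (\<lambda>x. a * f x + b * g x) = G \<beta>" for \<beta>
    using Dpart_pder_closed_family[of G \<beta> "\<lambda>_. 0"] by simp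
  then show "Dpart \<beta> (\<lambda>x. a * f x + b * g x) = (\<lambda>x. a * Dpart \<beta> f x + b * Dpart \<beta> g x)"
    by (simp add: G_def fun_eq_iff)
  show "smooth_fun (\<lambda>x. a * f x + b * g x)"
    unfolding smooth_fun_def DG differentiable_def using G' by blast
qed

section \<open>Estimates along lines and uniform convergence\<close>

lemma smooth_fun_Lipschitz:
  fixes f :: "real^'n::finite \<Rightarrow> complex"
  assumes "smooth_fun f" and B: "\<And>j y. norm (Dpart (mi_inc (\<lambda>_. 0) j) f y) \<le> B"
  shows "norm (f x - f y) \<le> (real CARD('n) * B) * norm (x - y)"
proof (rule differentiable_bound[OF convex_UNIV])
  show "(f has_derivative (\<lambda>v. \<Sum>j\<in>UNIV. of_real (v$j) * Dpart (mi_inc (\<lambda>_. 0) j) f z)) (at z within UNIV)" for z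
    using Dpart_has_derivative[OF assms(1), of "\<lambda>_. 0" z] by simp
  show "onorm (\<lambda>v. \<Sum>j\<in>UNIV. of_real (v$j) * Dpart (mi_inc (\<lambda>_. 0) j) f z) \<le> real CARD('n) * B" for z
    by (rule onorm_le) (rule norm_sum_of_real_component_le[OF B])
qed auto

lemma Dpart_line_Lipschitz:
  assumes "smooth_fun f" and B: "\<And>y. norm (Dpart (mi_inc \<gamma> j) f y) \<le> B"
  shows "norm (Dpart \<gamma> f (x + t *\<^sub>R axis j 1) - Dpart \<gamma> f x) \<le> B * \<bar>t\<bar>"
proof -
  have "norm (Dpart \<gamma> f (x + t *\<^sub>R axis j 1) - Dpart \<gamma> f x - t *\<^sub>R 0) \<le> B * \<bar>t\<bar>"
    by (rule line_increment_linearization[OF Dpart_has_derivative[OF assms(1)]]) (simp add: B)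
  then show ?thesis by simp
qed

lemma Dpart_Taylor_line:
  assumes "smooth_fun f" and B: "\<And>y. norm (Dpart (mi_inc (mi_inc \<gamma> j) j) f y) \<le> B"
  shows "norm (Dpart \<gamma> f (x + t *\<^sub>R axis j 1) - Dpart \<gamma> f x - t *\<^sub>R Dpart (mi_inc \<gamma> j) f x) \<le> B * t\<^sup>2"
proof -
  have "B \<ge> 0" using order_trans[OF norm_ge_zero B[of x]] .
  have "norm (Dpart (mi_inc \<gamma> j) f (x + s *\<^sub>R axis j 1) - Dpart (mi_inc \<gamma> j) f x) \<le> B * \<bar>t\<bar>" if "\<bar>s\<bar> \<le> \<bar>t\<bar>" for s
    using order_trans[OF Dpart_line_Lipschitz[OF assms] mult_left_mono[OF that \<open>B \<ge> 0\<close>]] .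
  then have "norm (Dpart \<gamma> f (x + t *\<^sub>R axis j 1) - Dpart \<gamma> f x - t *\<^sub>R Dpart (mi_inc \<gamma> j) f x) \<le> B * \<bar>t\<bar> * \<bar>t\<bar>"
    by (intro line_increment_linearization[OF Dpart_has_derivative[OF assms(1)]]) simp
  then show ?thesis by (simp add: power2_eq_square abs_mult_self mult.assoc)
qed

lemma uniformly_Cauchy_on_compact_Lipschitz:
  fixes f :: "nat \<Rightarrow> 'a::metric_space \<Rightarrow> 'b::metric_space"
  assumes "compact S" and conv: "\<And>x. x \<in> S \<Longrightarrow> convergent (\<lambda>n. f n x)"
    and lip: "\<And>n x y. x \<in> S \<Longrightarrow> y \<in> S \<Longrightarrow> dist (f n x) (f n y) \<le> L * dist x y"
  shows "uniformly_Cauchy_on S f"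
proof (rule uniformly_Cauchy_onI)
  fix e :: real assume "e > 0"
  define \<delta> where "\<delta> = e / (3 * (\<bar>L\<bar> + 1))"
  have "\<delta> > 0" using \<open>e > 0\<close> by (simp add: \<delta>_def)
  have L\<delta>: "\<bar>L\<bar> * \<delta> < e / 3"
    using \<open>e > 0\<close> by (simp add: \<delta>_def field_simps)
  have near: "dist (f n x) (f n c) < e / 3" if "x \<in> S" "c \<in> S" "dist x c < \<delta>" for n x c
  proof -
    have "dist (f n x) (f n c) \<le> \<bar>L\<bar> * dist x c"
      using lip[OF that(1,2), of n] by (meson abs_ge_self mult_right_mono order_trans zero_le_dist)
    also have "\<dots> \<le> \<bar>L\<bar> * \<delta>" using that(3) by (intro mult_left_mono) auto
    finally show ?thesis using L\<delta> by linarith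
  qed
  obtain T where "T \<subseteq> S" "finite T" and cover: "S \<subseteq> (\<Union>c\<in>T. ball c \<delta>)"
    using compactE_image[OF \<open>compact S\<close>, of S "\<lambda>c. ball c \<delta>"] \<open>\<delta> > 0\<close> by force
  have "\<forall>c\<in>T. \<exists>N. \<forall>m\<ge>N. \<forall>n\<ge>N. dist (f m c) (f n c) < e / 3"
  proof
    fix c assume "c \<in> T"
    have "Cauchy (\<lambda>n. f n c)" using conv[of c] \<open>T \<subseteq> S\<close> \<open>c \<in> T\<close> by (auto intro: convergent_Cauchy)
    moreover have "e / 3 > 0" using \<open>e > 0\<close> by simp
    ultimately show "\<exists>N. \<forall>m\<ge>N. \<forall>n\<ge>N. dist (f m c) (f n c) < e / 3" unfolding Cauchy_def by blast
  qed
  then obtain N where N: "\<And>c m n. c \<in> T \<Longrightarrow> m \<ge> N c \<Longrightarrow> n \<ge> N c \<Longrightarrow> dist (f m c) (f n c) < e / 3"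
    by (metis bchoice)
  show "\<exists>M. \<forall>x\<in>S. \<forall>m\<ge>M. \<forall>n\<ge>M. dist (f m x) (f n x) < e"
  proof (intro exI ballI allI impI)
    fix x m n assume "x \<in> S" "m \<ge> (\<Sum>c\<in>T. N c)" "n \<ge> (\<Sum>c\<in>T. N c)"
    then obtain c where "c \<in> T" "dist c x < \<delta>" using cover by auto
    then have "m \<ge> N c" "n \<ge> N c"
      using \<open>m \<ge> _\<close> \<open>n \<ge> _\<close> member_le_sum[of c T N] \<open>finite T\<close> by auto
    have "c \<in> S" using \<open>c \<in> T\<close> \<open>T \<subseteq> S\<close> by auto
    have "dist (f m x) (f n x) \<le> dist (f m x) (f m c) + dist (f m c) (f n c) + dist (f n c) (f n x)"
      using dist_triangle[of "f m x" "f n x" "f m c"] dist_triangle[of "f m c" "f n x" "f n c"] by linarith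
    also have "\<dots> < e / 3 + e / 3 + e / 3"
      using near[OF \<open>x \<in> S\<close> \<open>c \<in> S\<close>, of m] near[OF \<open>x \<in> S\<close> \<open>c \<in> S\<close>, of n]
        N[OF \<open>c \<in> T\<close> \<open>m \<ge> N c\<close> \<open>n \<ge> N c\<close>] \<open>dist c x < \<delta>\<close>
      by (simp add: dist_commute)
    finally show "dist (f m x) (f n x) < e" by simp
  qed
qed

lemma uniformly_Cauchy_on_UNIV_derivative:
  fixes F G :: "nat \<Rightarrow> 'a::real_normed_vector \<Rightarrow> 'b::real_normed_vector"
  assumes F: "uniformly_Cauchy_on UNIV F"
    and taylor: "\<And>n x d. norm (F n (x + d *\<^sub>R v) - F n x - d *\<^sub>R G n x) \<le> B * d\<^sup>2"
  shows "uniformly_Cauchy_on UNIV G"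
proof (rule uniformly_Cauchy_onI)
  fix e :: real assume "e > 0"
  have "B \<ge> 0" using order_trans[OF norm_ge_zero taylor[of 0 0 1]] by simp
  define \<delta> where "\<delta> = e / (4 * (B + 1))"
  have "\<delta> > 0" using \<open>e > 0\<close> \<open>B \<ge> 0\<close> by (simp add: \<delta>_def)
  have B\<delta>: "2 * B * \<delta> < e / 2" using \<open>e > 0\<close> \<open>B \<ge> 0\<close> by (simp add: \<delta>_def field_simps)
  have "e * \<delta> / 4 > 0" using \<open>e > 0\<close> \<open>\<delta> > 0\<close> by simp
  then obtain N where N: "\<forall>x\<in>UNIV. \<forall>m\<ge>N. \<forall>n\<ge>N. norm (F m x - F n x) < e * \<delta> / 4"
    using F unfolding uniformly_Cauchy_on_def dist_norm by blast
  have norm4: "norm (a - b - c + d) \<le> norm a + norm b + norm c + norm d" for a b c d :: 'b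
    using norm_triangle_ineq4[of "a - b" c] norm_triangle_ineq4[of a b] norm_triangle_ineq[of "a - b - c" d] by linarith
  show "\<exists>M. \<forall>x\<in>UNIV. \<forall>m\<ge>M. \<forall>n\<ge>M. dist (G m x) (G n x) < e"
  proof (intro exI ballI allI impI)
    fix x m n assume "m \<ge> N" "n \<ge> N"
    let ?y = "x + \<delta> *\<^sub>R v"
    have "\<delta> *\<^sub>R (G m x - G n x) = (F m ?y - F n ?y) - (F m x - F n x)
        - (F m ?y - F m x - \<delta> *\<^sub>R G m x) + (F n ?y - F n x - \<delta> *\<^sub>R G n x)"
      by (simp add: algebra_simps)
    then have "\<delta> * norm (G m x - G n x) \<le> norm (F m ?y - F n ?y) + norm (F m x - F n x)
        + norm (F m ?y - F m x - \<delta> *\<^sub>R G m x) + norm (F n ?y - F n x - \<delta> *\<^sub>R G n x)"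
      using \<open>\<delta> > 0\<close> norm4 by (metis abs_of_pos norm_scaleR)
    also have "\<dots> < e * \<delta> / 4 + e * \<delta> / 4 + B * \<delta>\<^sup>2 + B * \<delta>\<^sup>2"
      using N \<open>m \<ge> N\<close> \<open>n \<ge> N\<close> taylor[of m x \<delta>] taylor[of n x \<delta>]
      by (intro add_less_le_mono add_strict_mono) auto
    also have "\<dots> = \<delta> * (e / 2 + 2 * B * \<delta>)" by (simp add: power2_eq_square algebra_simps)
    also have "\<dots> < \<delta> * e" using B\<delta> \<open>\<delta> > 0\<close> by simp
    finally show "dist (G m x) (G n x) < e" using \<open>\<delta> > 0\<close> by (simp add: dist_norm)
  qed
qed

section \<open>The terms of the norms \<open>p\<^sub>h\<close>\<close>

definition GS_weight :: "real \<Rightarrow> real \<Rightarrow> real \<Rightarrow> 'n::finite mindex \<Rightarrow> 'n mindex \<Rightarrow> real" where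
  "GS_weight s t h \<alpha> \<beta> = h ^ (mi_abs \<alpha> + mi_abs \<beta>) / (mi_fact \<alpha> powr t * mi_fact \<beta> powr s)"

lemma GS_weight_pos: "h > 0 \<Longrightarrow> GS_weight s t h \<alpha> \<beta> > 0"
  using mi_fact_ge_1[of \<alpha>] mi_fact_ge_1[of \<beta>] by (simp add: GS_weight_def)

lemma GS_weight_nonneg: "h \<ge> 0 \<Longrightarrow> GS_weight s t h \<alpha> \<beta> \<ge> 0"
  using mi_fact_ge_1[of \<alpha>] mi_fact_ge_1[of \<beta>] by (simp add: GS_weight_def)

lemma GS_term_eq_weight: "GS_term s t h \<phi> x \<alpha> \<beta> = GS_weight s t h \<alpha> \<beta> * (\<bar>mi_pow x \<alpha>\<bar> * norm (Dpart \<beta> \<phi> x))"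
  by (simp add: GS_term_def GS_weight_def norm_mult)

lemma GS_term_nonneg: "h \<ge> 0 \<Longrightarrow> GS_term s t h \<phi> x \<alpha> \<beta> \<ge> 0"
  by (simp add: GS_term_eq_weight GS_weight_nonneg)

lemma GS_term_zero_zero [simp]: "GS_term s t h \<phi> x (\<lambda>_. 0) (\<lambda>_. 0) = norm (\<phi> x)"
  by (simp add: GS_term_eq_weight GS_weight_def)

lemma GS_term_boundD:
  "GS_term s t h \<phi> x \<alpha> \<beta> \<le> M \<Longrightarrow> h > 0 \<Longrightarrow> \<bar>mi_pow x \<alpha>\<bar> * norm (Dpart \<beta> \<phi> x) \<le> M / GS_weight s t h \<alpha> \<beta>"
  using GS_weight_pos[of h s t \<alpha> \<beta>] by (simp add: GS_term_eq_weight field_simps)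

lemma GS_term_le_imp_decay:
  assumes "h > 0" and bound: "\<And>\<alpha>'. GS_term s t h \<phi> x \<alpha>' \<beta> \<le> K"
  shows "\<bar>mi_pow x \<alpha>\<bar> * norm (Dpart \<beta> \<phi> x) * (x$i)\<^sup>2 \<le> (\<Sum>k\<in>UNIV. K / GS_weight s t h (\<alpha>(k := \<alpha> k + 2)) \<beta>)"
proof -
  have "K \<ge> 0" using order_trans[OF GS_term_nonneg[OF less_imp_le[OF \<open>h > 0\<close>]] bound] .
  have "\<bar>mi_pow x \<alpha>\<bar> * norm (Dpart \<beta> \<phi> x) * (x$i)\<^sup>2 = \<bar>mi_pow x (\<alpha>(i := \<alpha> i + 2))\<bar> * norm (Dpart \<beta> \<phi> x)"
    unfolding mi_pow_add2 by (simp add: abs_mult algebra_simps)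
  also have "\<dots> \<le> K / GS_weight s t h (\<alpha>(i := \<alpha> i + 2)) \<beta>"
    by (rule GS_term_boundD[OF bound \<open>h > 0\<close>])
  also have "\<dots> \<le> (\<Sum>k\<in>UNIV. K / GS_weight s t h (\<alpha>(k := \<alpha> k + 2)) \<beta>)"
    using \<open>K \<ge> 0\<close> by (intro member_le_sum) (auto intro!: divide_nonneg_pos GS_weight_pos \<open>h > 0\<close>)
  finally show ?thesis .
qed

lemma le_of_mult_square_le:
  fixes a K \<epsilon> y :: real
  assumes "a * y\<^sup>2 \<le> K" and "\<epsilon> > 0" and "max 1 (K / \<epsilon>) \<le> \<bar>y\<bar>"
  shows "a \<le> \<epsilon>"
proof -
  have "K / \<epsilon> \<le> \<bar>y\<bar> * \<bar>y\<bar>" "y \<noteq> 0"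
    using assms(3) mult_mono[of "max 1 (K / \<epsilon>)" "\<bar>y\<bar>" 1 "\<bar>y\<bar>"] by auto
  then have "K \<le> \<epsilon> * y\<^sup>2" and "y\<^sup>2 > 0"
    using \<open>\<epsilon> > 0\<close> by (simp add: power2_eq_square field_simps, simp)
  moreover from this(1) have "a * y\<^sup>2 \<le> \<epsilon> * y\<^sup>2" using assms(1) by linarith
  ultimately show ?thesis by (simp add: mult_le_cancel_right_pos)
qed

lemma GS_term_rescale:
  "h > 0 \<Longrightarrow> GS_term s t h' \<phi> x \<alpha> \<beta> = (h' / h) ^ (mi_abs \<alpha> + mi_abs \<beta>) * GS_term s t h \<phi> x \<alpha> \<beta>"
  by (simp add: GS_term_eq_weight GS_weight_def power_divide)

lemma GS_term_mono_step: "0 \<le> h' \<Longrightarrow> h' \<le> h \<Longrightarrow> GS_term s t h' \<phi> x \<alpha> \<beta> \<le> GS_term s t h \<phi> x \<alpha> \<beta>"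
  unfolding GS_term_eq_weight using mi_fact_ge_1[of \<alpha>] mi_fact_ge_1[of \<beta>]
  by (intro mult_right_mono) (auto simp: GS_weight_def intro!: divide_right_mono power_mono)

lemma GS_finite_mono: "0 \<le> h' \<Longrightarrow> h' \<le> h \<Longrightarrow> GS_finite s t h \<phi> \<Longrightarrow> GS_finite s t h' \<phi>"
  unfolding GS_finite_def by (meson GS_term_mono_step order_trans)

lemma GS_term_le_GS_norm: "GS_finite s t h \<phi> \<Longrightarrow> GS_term s t h \<phi> x \<alpha> \<beta> \<le> GS_norm s t h \<phi>"
  unfolding GS_norm_def GS_finite_def
  by (rule cSUP_upper2[of _ _ "(x, \<alpha>, \<beta>)"]) (auto simp: bdd_above_def)

lemma GS_norm_le: "(\<And>x \<alpha> \<beta>. GS_term s t h \<phi> x \<alpha> \<beta> \<le> C) \<Longrightarrow> GS_norm s t h \<phi> \<le> C"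
  unfolding GS_norm_def by (rule cSUP_least) auto

lemma GS_norm_nonneg: "GS_finite s t h \<phi> \<Longrightarrow> h \<ge> 0 \<Longrightarrow> GS_norm s t h \<phi> \<ge> 0"
  by (meson GS_term_le_GS_norm GS_term_nonneg order_trans)

lemma GS_term_lincomb_le:
  assumes "smooth_fun f" "smooth_fun g" "h \<ge> 0"
  shows "GS_term s t h (\<lambda>x. a * f x + b * g x) x \<alpha> \<beta> \<le> norm a * GS_term s t h f x \<alpha> \<beta> + norm b * GS_term s t h g x \<alpha> \<beta>"
proof -
  have w: "GS_weight s t h \<alpha> \<beta> * \<bar>mi_pow x \<alpha>\<bar> \<ge> 0" using GS_weight_nonneg[OF assms(3), of s t \<alpha> \<beta>] by simp
  have "GS_term s t h (\<lambda>x. a * f x + b * g x) x \<alpha> \<beta>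
      = (GS_weight s t h \<alpha> \<beta> * \<bar>mi_pow x \<alpha>\<bar>) * norm (a * Dpart \<beta> f x + b * Dpart \<beta> g x)"
    by (simp add: GS_term_eq_weight Dpart_lincomb[OF assms(1,2)])
  also have "\<dots> \<le> (GS_weight s t h \<alpha> \<beta> * \<bar>mi_pow x \<alpha>\<bar>) * (norm a * norm (Dpart \<beta> f x) + norm b * norm (Dpart \<beta> g x))"
    using w by (rule mult_left_mono[rotated]) (metis norm_mult norm_triangle_ineq)
  also have "\<dots> = norm a * GS_term s t h f x \<alpha> \<beta> + norm b * GS_term s t h g x \<alpha> \<beta>"
    by (simp add: GS_term_eq_weight algebra_simps)
  finally show ?thesis .
qed

lemma GS_term_scale:
  "smooth_fun f \<Longrightarrow> GS_term s t h (\<lambda>x. c * f x) x \<alpha> \<beta> = norm c * GS_term s t h f x \<alpha> \<beta>"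
  using Dpart_lincomb(1)[of f f \<beta> c 0] by (simp add: GS_term_eq_weight norm_mult)

lemma GS_term_diff_le:
  assumes "smooth_fun f" "smooth_fun g" "h \<ge> 0"
  shows "GS_term s t h (\<lambda>x. f x - g x) x \<alpha> \<beta> \<le> GS_term s t h f x \<alpha> \<beta> + GS_term s t h g x \<alpha> \<beta>"
  using GS_term_lincomb_le[OF assms, where a = 1 and b = "-1"] by simp

lemma GS_imp_smooth_fun: "\<phi> \<in> GS s t \<Longrightarrow> smooth_fun \<phi>"
  by (simp add: GS_def schwartz_def)

lemma GS_memI:
  assumes "smooth_fun \<phi>" "h > 0" "GS_finite s t h \<phi>"
  shows "\<phi> \<in> GS s t"
proof -
  obtain C where C: "\<And>x \<alpha> \<beta>. GS_term s t h \<phi> x \<alpha> \<beta> \<le> C" using assms(3) unfolding GS_finite_def by blast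
  have "norm (of_real (mi_pow x \<alpha>) * Dpart \<beta> \<phi> x) \<le> C / GS_weight s t h \<alpha> \<beta>" for x \<alpha> \<beta>
    by (simp add: norm_mult GS_term_boundD[OF C assms(2)])
  then show ?thesis using assms unfolding GS_def schwartz_def by blast
qed

lemma GS_lincomb:
  assumes "f \<in> GS s t" "g \<in> GS s t"
  shows "(\<lambda>x. a * f x + b * g x) \<in> GS s t"
proof -
  obtain h1 h2 where "h1 > 0" "GS_finite s t h1 f" "h2 > 0" "GS_finite s t h2 g"
    using assms unfolding GS_def by auto
  then have h: "min h1 h2 > 0" and "GS_finite s t (min h1 h2) f" "GS_finite s t (min h1 h2) g"
    using GS_finite_mono[of "min h1 h2" h1] GS_finite_mono[of "min h1 h2" h2] by auto
  then obtain C1 C2 where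
    "\<And>x \<alpha> \<beta>. GS_term s t (min h1 h2) f x \<alpha> \<beta> \<le> C1" "\<And>x \<alpha> \<beta>. GS_term s t (min h1 h2) g x \<alpha> \<beta> \<le> C2"
    unfolding GS_finite_def by blast
  then have "GS_finite s t (min h1 h2) (\<lambda>x. a * f x + b * g x)"
    unfolding GS_finite_def using GS_term_lincomb_le[OF GS_imp_smooth_fun[OF assms(1)] GS_imp_smooth_fun[OF assms(2)]] h
    by (meson add_mono less_imp_le mult_left_mono norm_ge_zero order_trans)
  then show ?thesis
    using GS_memI[OF Dpart_lincomb(2)[OF GS_imp_smooth_fun[OF assms(1)] GS_imp_smooth_fun[OF assms(2)]] h] by blast
qed

lemma GS_diff: "f \<in> GS s t \<Longrightarrow> g \<in> GS s t \<Longrightarrow> (\<lambda>x. f x - g x) \<in> GS s t"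
  using GS_lincomb[of f s t g 1 "-1"] by simp

section \<open>Convergence and boundedness\<close>

lemma GS_cont_seminorm_point_eval: "GS_cont_seminorm s t (\<lambda>\<phi>. norm (\<phi> x))"
  unfolding GS_cont_seminorm_def
proof (intro conjI ballI allI impI)
  fix h :: real
  have "norm (\<phi> x) \<le> 1 * GS_norm s t h \<phi>" if "GS_finite s t h \<phi>" for \<phi> :: "real^'a \<Rightarrow> complex"
    using GS_term_le_GS_norm[OF that, of x "\<lambda>_. 0" "\<lambda>_. 0"] by simp
  then show "\<exists>C. \<forall>\<phi>\<in>GS s t. GS_finite s t h \<phi> \<longrightarrow> norm (\<phi> x) \<le> C * GS_norm s t h \<phi>" by blast
qed (auto simp: norm_mult norm_triangle_ineq)

lemma GS_converges_imp_convergent: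
  assumes "GS_converges s t \<phi>s"
  shows "convergent (\<lambda>n. \<phi>s n x)"
proof -
  obtain \<phi> where "\<And>q. GS_cont_seminorm s t q \<Longrightarrow> (\<lambda>n. q (\<lambda>x. \<phi>s n x - \<phi> x)) \<longlonglongrightarrow> 0"
    using assms unfolding GS_converges_def by blast
  from this[OF GS_cont_seminorm_point_eval] have "(\<lambda>n. \<phi>s n x) \<longlonglongrightarrow> \<phi> x"
    by (simp add: tendsto_norm_zero_iff LIM_zero_iff)
  then show ?thesis by (rule convergentI)
qed

lemma GS_converges_imp_bounded:
  fixes \<phi>s :: "nat \<Rightarrow> real^'n::finite \<Rightarrow> complex"
  assumes \<phi>s: "\<And>n. \<phi>s n \<in> GS s t" and "GS_converges s t \<phi>s"
  shows "GS_bounded s t \<phi>s"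
  unfolding GS_bounded_def
proof (intro allI impI)
  fix q :: "(real^'n \<Rightarrow> complex) \<Rightarrow> real" assume q: "GS_cont_seminorm s t q"
  obtain \<phi> where \<phi>: "\<phi> \<in> GS s t" and "(\<lambda>n. q (\<lambda>x. \<phi>s n x - \<phi> x)) \<longlonglongrightarrow> 0"
    using assms q unfolding GS_converges_def by blast
  then have "Bseq (\<lambda>n. q (\<lambda>x. \<phi>s n x - \<phi> x))" by (intro convergent_imp_Bseq convergentI)
  then obtain K where K: "\<And>n. norm (q (\<lambda>x. \<phi>s n x - \<phi> x)) \<le> K" by (meson BseqE)
  have triangle: "\<forall>\<theta>\<in>GS s t. \<forall>\<zeta>\<in>GS s t. q (\<lambda>x. \<theta> x + \<zeta> x) \<le> q \<theta> + q \<zeta>"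
    using q unfolding GS_cont_seminorm_def by blast
  have "q (\<phi>s n) \<le> K + q \<phi>" for n
  proof -
    have "q (\<phi>s n) = q (\<lambda>x. (\<phi>s n x - \<phi> x) + \<phi> x)" by simp
    also have "\<dots> \<le> q (\<lambda>x. \<phi>s n x - \<phi> x) + q \<phi>"
      by (rule triangle[rule_format, OF GS_diff[OF \<phi>s \<phi>] \<phi>])
    also have "\<dots> \<le> K + q \<phi>" using K[of n] by simp
    finally show ?thesis .
  qed
  then show "\<exists>M. \<forall>n. q (\<phi>s n) \<le> M" by blast
qed

lemma cSUP_mult_left_nonneg:
  fixes f :: "'a \<Rightarrow> real"
  assumes "c \<ge> 0" "bdd_above (range f)"
  shows "(SUP k. c * f k) = c * (SUP k. f k)"
proof -
  have "mono (\<lambda>x. c * x)" using assms(1) by (intro monoI mult_left_mono)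
  moreover have "continuous (at_left (Sup (range f))) (\<lambda>x. c * x)" by (intro continuous_intros)
  ultimately have "c * Sup (range f) = (SUP x\<in>range f. c * x)"
    using assms(2) by (intro continuous_at_Sup_mono) auto
  then show ?thesis by (simp add: image_comp)
qed

lemma GS_term_shrinking_steps_le:
  fixes X :: "nat \<Rightarrow> real^'n::finite"
  assumes h: "\<And>k. h k > 0" "h \<longlonglongrightarrow> 0" and "h' > 0"
  shows "\<exists>C. \<forall>(\<theta> :: real^'n \<Rightarrow> complex) k. GS_finite s t h' \<theta> \<longrightarrow>
    GS_term s t (h k) \<theta> (X k) (A k) (B k) \<le> C * GS_norm s t h' \<theta>"
proof -
  obtain N where N: "\<And>k. k \<ge> N \<Longrightarrow> h k < h'"
    using order_tendstoD(2)[OF h(2) \<open>h' > 0\<close>] unfolding eventually_sequentially by blast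
  define m where "m k = mi_abs (A k) + mi_abs (B k)" for k
  define C where "C = 1 + (\<Sum>k<N. (h k / h') ^ m k)"
  have pow_nonneg: "(h k / h') ^ m k \<ge> 0" for k using h(1)[of k] \<open>h' > 0\<close> by simp
  then have sum_nonneg: "(\<Sum>k<N. (h k / h') ^ m k) \<ge> 0" by (simp add: sum_nonneg)
  have factor: "(h k / h') ^ m k \<le> C" for k
  proof (cases "k < N")
    case True
    then have "(h k / h') ^ m k \<le> (\<Sum>k<N. (h k / h') ^ m k)"
      by (intro member_le_sum pow_nonneg) auto
    then show ?thesis by (simp add: C_def)
  next
    case False
    then have "(h k / h') ^ m k \<le> 1" using N[of k] h(1)[of k] \<open>h' > 0\<close> by (intro power_le_one) auto
    then show ?thesis using sum_nonneg by (simp add: C_def)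
  qed
  have "C \<ge> 0" using sum_nonneg by (simp add: C_def)
  show ?thesis
  proof (intro exI allI impI)
    fix \<theta> :: "real^'n \<Rightarrow> complex" and k assume fin: "GS_finite s t h' \<theta>"
    have "GS_term s t (h k) \<theta> (X k) (A k) (B k) = (h k / h') ^ m k * GS_term s t h' \<theta> (X k) (A k) (B k)"
      unfolding m_def by (rule GS_term_rescale[OF \<open>h' > 0\<close>])
    also have "\<dots> \<le> C * GS_norm s t h' \<theta>"
      using \<open>C \<ge> 0\<close> \<open>h' > 0\<close> by (intro mult_mono factor GS_term_le_GS_norm fin GS_term_nonneg) auto
    finally show "GS_term s t (h k) \<theta> (X k) (A k) (B k) \<le> C * GS_norm s t h' \<theta>" .
  qed
qed

lemma GS_term_shrinking_steps_bdd_above: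
  fixes X :: "nat \<Rightarrow> real^'n::finite"
  assumes "\<And>k. h k > 0" "h \<longlonglongrightarrow> 0" "\<theta> \<in> GS s t"
  shows "bdd_above (range (\<lambda>k. GS_term s t (h k) \<theta> (X k) (A k) (B k)))"
proof -
  obtain h' where "h' > 0" and fin: "GS_finite s t h' \<theta>" using assms(3) unfolding GS_def by blast
  then obtain C where "\<forall>(\<theta> :: real^'n \<Rightarrow> complex) k. GS_finite s t h' \<theta> \<longrightarrow>
      GS_term s t (h k) \<theta> (X k) (A k) (B k) \<le> C * GS_norm s t h' \<theta>"
    using GS_term_shrinking_steps_le[OF assms(1,2) \<open>h' > 0\<close>, of s t X A B] by blast
  with fin show ?thesis by (intro bdd_aboveI2[where M = "C * GS_norm s t h' \<theta>"]) simp
qed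

lemma GS_cont_seminorm_SUP_terms:
  fixes X :: "nat \<Rightarrow> real^'n::finite"
  assumes h: "\<And>k. h k > 0" "h \<longlonglongrightarrow> 0"
  shows "GS_cont_seminorm s t (\<lambda>\<theta>. SUP k. GS_term s t (h k) \<theta> (X k) (A k) (B k))"
proof -
  let ?T = "\<lambda>k \<theta>. GS_term s t (h k) \<theta> (X k) (A k) (B k)"
  note bdd = GS_term_shrinking_steps_bdd_above[OF h]
  have T_nonneg: "?T k \<theta> \<ge> 0" for k \<theta> using h(1) by (simp add: GS_term_nonneg less_imp_le)
  show ?thesis
    unfolding GS_cont_seminorm_def
  proof (intro conjI ballI allI impI)
    fix \<theta> :: "real^'n \<Rightarrow> complex" assume "\<theta> \<in> GS s t"
    then show "0 \<le> (SUP k. ?T k \<theta>)" using T_nonneg by (intro cSUP_upper2[OF bdd UNIV_I]) auto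
  next
    fix \<theta> \<zeta> :: "real^'n \<Rightarrow> complex" assume \<theta>: "\<theta> \<in> GS s t" and \<zeta>: "\<zeta> \<in> GS s t"
    have "?T k (\<lambda>x. \<theta> x + \<zeta> x) \<le> ?T k \<theta> + ?T k \<zeta>" for k
      using GS_term_lincomb_le[OF GS_imp_smooth_fun[OF \<theta>] GS_imp_smooth_fun[OF \<zeta>], where a = 1 and b = 1] h(1)
      by (simp add: less_imp_le)
    also have "?T k \<theta> + ?T k \<zeta> \<le> (SUP k. ?T k \<theta>) + (SUP k. ?T k \<zeta>)" for k
      by (intro add_mono cSUP_upper bdd \<theta> \<zeta> UNIV_I)
    finally show "(SUP k. ?T k (\<lambda>x. \<theta> x + \<zeta> x)) \<le> (SUP k. ?T k \<theta>) + (SUP k. ?T k \<zeta>)"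
      by (intro cSUP_least) auto
  next
    fix \<theta> :: "real^'n \<Rightarrow> complex" and c :: complex assume \<theta>: "\<theta> \<in> GS s t"
    then show "(SUP k. ?T k (\<lambda>x. c * \<theta> x)) = norm c * (SUP k. ?T k \<theta>)"
      by (simp add: GS_term_scale GS_imp_smooth_fun cSUP_mult_left_nonneg bdd)
  next
    fix h' :: real assume "h' > 0"
    then obtain C where C: "\<forall>(\<theta> :: real^'n \<Rightarrow> complex) k. GS_finite s t h' \<theta> \<longrightarrow> ?T k \<theta> \<le> C * GS_norm s t h' \<theta>"
      using GS_term_shrinking_steps_le[OF h \<open>h' > 0\<close>, of s t X A B] by blast
    have "(SUP k. ?T k \<theta>) \<le> C * GS_norm s t h' \<theta>" if "GS_finite s t h' \<theta>" for \<theta>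
      using C that by (intro cSUP_least) auto
    then show "\<exists>C. \<forall>\<theta>\<in>GS s t. GS_finite s t h' \<theta> \<longrightarrow> (SUP k. ?T k \<theta>) \<le> C * GS_norm s t h' \<theta>"
      by blast
  qed
qed

lemma GS_bounded_imp_step_bounded:
  assumes \<phi>s: "\<And>n. \<phi>s n \<in> GS s t" and "GS_bounded s t \<phi>s"
  shows "\<exists>h>0. \<exists>M. \<forall>n x \<alpha> \<beta>. GS_term s t h (\<phi>s n) x \<alpha> \<beta> \<le> M"
proof (rule ccontr)
  define h where "h k = 1 / real (Suc k)" for k
  have h: "\<And>k. h k > 0" "h \<longlonglongrightarrow> 0"
    unfolding h_def by (simp, rule LIMSEQ_Suc[OF lim_const_over_n])
  assume "\<not> ?thesis"
  then have "\<not> (\<forall>n x \<alpha> \<beta>. GS_term s t (h k) (\<phi>s n) x \<alpha> \<beta> \<le> real k)" for k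
    using h(1)[of k] by blast
  then have "\<exists>n x \<alpha> \<beta>. GS_term s t (h k) (\<phi>s n) x \<alpha> \<beta> > real k" for k
    by (simp add: not_le)
  then obtain N X A B where NXAB: "\<And>k. GS_term s t (h k) (\<phi>s (N k)) (X k) (A k) (B k) > real k"
    by metis
  from h have "GS_cont_seminorm s t (\<lambda>\<theta>. SUP k. GS_term s t (h k) \<theta> (X k) (A k) (B k))"
    by (rule GS_cont_seminorm_SUP_terms)
  then obtain M where M: "\<And>n. (SUP k. GS_term s t (h k) (\<phi>s n) (X k) (A k) (B k)) \<le> M"
    using assms(2) unfolding GS_bounded_def by blast
  have le_M: "GS_term s t (h k) (\<phi>s (N k)) (X k) (A k) (B k) \<le> M" for k
    by (rule order_trans[OF cSUP_upper[OF UNIV_I GS_term_shrinking_steps_bdd_above[OF h \<phi>s]] M])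
  show False
    using le_M[of "nat \<lceil>M\<rceil>"] NXAB[of "nat \<lceil>M\<rceil>"] real_nat_ceiling_ge[of M] by linarith
qed

lemma GS_convergesI:
  fixes \<phi> :: "real^'n::finite \<Rightarrow> complex"
  assumes \<phi>: "\<phi> \<in> GS s t" and \<phi>s: "\<And>n. \<phi>s n \<in> GS s t" and "h > 0"
    and vanish: "\<And>\<epsilon>. \<epsilon> > 0 \<Longrightarrow> \<forall>\<^sub>F n in sequentially. \<forall>x \<alpha> \<beta>. GS_term s t h (\<lambda>x. \<phi>s n x - \<phi> x) x \<alpha> \<beta> \<le> \<epsilon>"
  shows "GS_converges s t \<phi>s"
  unfolding GS_converges_def
proof (intro bexI[OF _ \<phi>] allI impI)
  fix q :: "(real^'n \<Rightarrow> complex) \<Rightarrow> real" assume q: "GS_cont_seminorm s t q"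
  then obtain C where C: "\<And>\<theta>. \<theta> \<in> GS s t \<Longrightarrow> GS_finite s t h \<theta> \<Longrightarrow> q \<theta> \<le> C * GS_norm s t h \<theta>"
    using \<open>h > 0\<close> unfolding GS_cont_seminorm_def by blast
  have q_nonneg: "\<And>\<theta>. \<theta> \<in> GS s t \<Longrightarrow> q \<theta> \<ge> 0" using q unfolding GS_cont_seminorm_def by blast
  show "(\<lambda>n. q (\<lambda>x. \<phi>s n x - \<phi> x)) \<longlonglongrightarrow> 0"
  proof (rule tendstoI)
    fix r :: real assume "r > 0"
    define \<epsilon> where "\<epsilon> = r / (2 * (\<bar>C\<bar> + 1))"
    have "\<epsilon> > 0" using \<open>r > 0\<close> by (simp add: \<epsilon>_def)
    have C\<epsilon>: "\<bar>C\<bar> * \<epsilon> < r" using \<open>r > 0\<close> by (simp add: \<epsilon>_def field_simps add_nonneg_pos)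
    show "\<forall>\<^sub>F n in sequentially. dist (q (\<lambda>x. \<phi>s n x - \<phi> x)) 0 < r"
      using vanish[OF \<open>\<epsilon> > 0\<close>]
    proof eventually_elim
      case (elim n)
      let ?\<theta> = "\<lambda>x. \<phi>s n x - \<phi> x"
      have "?\<theta> \<in> GS s t" by (rule GS_diff[OF \<phi>s \<phi>])
      have fin: "GS_finite s t h ?\<theta>" using elim unfolding GS_finite_def by blast
      have "q ?\<theta> \<le> \<bar>C\<bar> * GS_norm s t h ?\<theta>"
        using \<open>h > 0\<close>
        by (intro order_trans[OF C[OF \<open>?\<theta> \<in> GS s t\<close> fin]] mult_right_mono GS_norm_nonneg[OF fin]) auto
      also have "\<dots> \<le> \<bar>C\<bar> * \<epsilon>" using elim by (intro mult_left_mono GS_norm_le) auto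
      finally show ?case using C\<epsilon> q_nonneg[OF \<open>?\<theta> \<in> GS s t\<close>] by simp
    qed
  qed
qed

lemma eventually_GS_term_le_of_uniform_limit:
  fixes \<theta> :: "nat \<Rightarrow> real^'n::finite \<Rightarrow> complex"
  assumes "h > 0" and bound: "\<And>n x \<alpha>'. GS_term s t h (\<theta> n) x \<alpha>' \<beta> \<le> K"
    and lim: "uniform_limit UNIV (\<lambda>n. Dpart \<beta> (\<theta> n)) (\<lambda>_. 0) sequentially" and "\<epsilon> > 0"
  shows "\<forall>\<^sub>F n in sequentially. \<forall>x. GS_term s t h (\<theta> n) x \<alpha> \<beta> \<le> \<epsilon>"
proof -
  define w where "w = GS_weight s t h \<alpha> \<beta>"
  have "w > 0" using GS_weight_pos[OF \<open>h > 0\<close>] by (simp add: w_def)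
  define Q where "Q = (\<Sum>k\<in>UNIV. K / GS_weight s t h (\<alpha>(k := \<alpha> k + 2)) \<beta>)"
  have decay: "w * (\<bar>mi_pow x \<alpha>\<bar> * norm (Dpart \<beta> (\<theta> n) x)) * (x$i)\<^sup>2 \<le> w * Q" for n x i
    using GS_term_le_imp_decay[OF \<open>h > 0\<close> bound[of n x], where \<alpha> = \<alpha> and i = i] \<open>w > 0\<close>
    by (simp add: Q_def mult.assoc)
  define R where "R = max 1 (w * Q / \<epsilon>)"
  have "R \<ge> 1" by (simp add: R_def)
  have "\<epsilon> / (w * R ^ mi_abs \<alpha>) > 0" using \<open>\<epsilon> > 0\<close> \<open>w > 0\<close> \<open>R \<ge> 1\<close> by simp
  from uniform_limitD[OF lim this]
  have "\<forall>\<^sub>F n in sequentially. \<forall>x. norm (Dpart \<beta> (\<theta> n) x) < \<epsilon> / (w * R ^ mi_abs \<alpha>)"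
    by (simp add: dist_norm)
  then show ?thesis
  proof eventually_elim
    case (elim n)
    show ?case
    proof
      fix x
      let ?P = "\<bar>mi_pow x \<alpha>\<bar> * norm (Dpart \<beta> (\<theta> n) x)"
      have "w * ?P \<le> \<epsilon>"
      proof (cases "\<exists>i. R \<le> \<bar>x$i\<bar>")
        case True
        then obtain i where "R \<le> \<bar>x$i\<bar>" by blast
        then show ?thesis
          unfolding R_def by (rule le_of_mult_square_le[OF decay[of x n i] \<open>\<epsilon> > 0\<close>])
      next
        case False
        then have "\<bar>mi_pow x \<alpha>\<bar> \<le> R ^ mi_abs \<alpha>" by (intro mi_pow_box) (simp add: not_le less_imp_le)
        then have "?P \<le> R ^ mi_abs \<alpha> * (\<epsilon> / (w * R ^ mi_abs \<alpha>))"
          using elim by (intro mult_mono) (auto intro: less_imp_le)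
        also have "\<dots> = \<epsilon> / w" using \<open>R \<ge> 1\<close> by simp
        finally show ?thesis using \<open>w > 0\<close> by (simp add: field_simps)
      qed
      then show "GS_term s t h (\<theta> n) x \<alpha> \<beta> \<le> \<epsilon>" by (simp add: GS_term_eq_weight w_def)
    qed
  qed
qed

lemma eventually_GS_term_half_step_le:
  fixes \<theta> :: "nat \<Rightarrow> real^'n::finite \<Rightarrow> complex"
  assumes "h > 0" and bound: "\<And>n x \<alpha> \<beta>. GS_term s t h (\<theta> n) x \<alpha> \<beta> \<le> K" and "\<epsilon> > 0"
    and each: "\<And>\<alpha> \<beta>. \<forall>\<^sub>F n in sequentially. \<forall>x. GS_term s t h (\<theta> n) x \<alpha> \<beta> \<le> \<epsilon>"
  shows "\<forall>\<^sub>F n in sequentially. \<forall>x \<alpha> \<beta>. GS_term s t (h / 2) (\<theta> n) x \<alpha> \<beta> \<le> \<epsilon>"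
proof -
  have "K \<ge> 0" using order_trans[OF GS_term_nonneg[OF less_imp_le[OF \<open>h > 0\<close>]] bound] .
  obtain m where "(1/2) ^ m < \<epsilon> / (K + 1)"
    using real_arch_pow_inv[of "\<epsilon> / (K + 1)" "1/2"] \<open>\<epsilon> > 0\<close> \<open>K \<ge> 0\<close> by auto
  then have "(1/2) ^ m * K \<le> \<epsilon>"
    using \<open>K \<ge> 0\<close> mult_left_mono[of K "K + 1" "(1/2) ^ m"] by (simp add: field_simps)
  define P where "P = (Pi UNIV (\<lambda>_. {..m}) :: 'n mindex set)"
  have "finite (P \<times> P)" unfolding P_def PiE_UNIV_domain[symmetric] by (intro finite_cartesian_product finite_PiE) auto
  then have "\<forall>\<^sub>F n in sequentially. \<forall>p\<in>P \<times> P. \<forall>x. GS_term s t h (\<theta> n) x (fst p) (snd p) \<le> \<epsilon>"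
    by (intro eventually_ball_finite ballI each)
  then show ?thesis
  proof eventually_elim
    case (elim n)
    show ?case
    proof (intro allI)
      fix x \<alpha> \<beta>
      show "GS_term s t (h / 2) (\<theta> n) x \<alpha> \<beta> \<le> \<epsilon>"
      proof (cases "(\<alpha>, \<beta>) \<in> P \<times> P")
        case True
        have "GS_term s t (h / 2) (\<theta> n) x \<alpha> \<beta> \<le> GS_term s t h (\<theta> n) x \<alpha> \<beta>"
          using \<open>h > 0\<close> by (intro GS_term_mono_step) auto
        also have "\<dots> \<le> \<epsilon>" using elim True by fastforce
        finally show ?thesis .
      next
        case False
        then have "\<not> (\<forall>i. \<alpha> i \<le> m) \<or> \<not> (\<forall>i. \<beta> i \<le> m)" unfolding P_def by auto
        then obtain i where "m < \<alpha> i \<or> m < \<beta> i" by (auto simp: not_le)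
        then have "m \<le> mi_abs \<alpha> + mi_abs \<beta>" using mi_le_abs[of \<alpha> i] mi_le_abs[of \<beta> i] by linarith
        have "GS_term s t (h / 2) (\<theta> n) x \<alpha> \<beta> = (1/2) ^ (mi_abs \<alpha> + mi_abs \<beta>) * GS_term s t h (\<theta> n) x \<alpha> \<beta>"
          using GS_term_rescale[OF \<open>h > 0\<close>, of s t "h / 2"] \<open>h > 0\<close> by simp
        also have "\<dots> \<le> (1/2) ^ m * K"
          using \<open>m \<le> _\<close> \<open>K \<ge> 0\<close> \<open>h > 0\<close> by (intro mult_mono power_decreasing bound GS_term_nonneg) auto
        finally show ?thesis using \<open>(1/2) ^ m * K \<le> \<epsilon>\<close> by linarith
      qed
    qed
  qed
qed

section \<open>Bounded pointwise convergent sequences\<close>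

locale GS_step_bounded_pointwise_convergent =
  fixes s t :: real and \<phi>s :: "nat \<Rightarrow> real^'n::finite \<Rightarrow> complex" and h M :: real
  assumes GS: "\<And>n. \<phi>s n \<in> GS s t" and step_pos: "h > 0"
    and step_bound: "\<And>n x \<alpha> \<beta>. GS_term s t h (\<phi>s n) x \<alpha> \<beta> \<le> M"
    and pointwise: "\<And>x. convergent (\<lambda>n. \<phi>s n x)"
begin

lemma smooth_fun_seq: "smooth_fun (\<phi>s n)"
  using GS by (rule GS_imp_smooth_fun)

lemma M_nonneg: "M \<ge> 0"
  using order_trans[OF GS_term_nonneg[OF less_imp_le[OF step_pos]] step_bound] .

lemma Dpart_bound: "norm (Dpart \<beta> (\<phi>s n) x) \<le> M / GS_weight s t h (\<lambda>_. 0) \<beta>"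
  using GS_term_boundD[OF step_bound[of n x "\<lambda>_. 0" \<beta>] step_pos] by simp

lemma small_outside_box:
  assumes "\<epsilon> > 0"
  obtains R where "\<And>n x i. R \<le> \<bar>x$i\<bar> \<Longrightarrow> norm (\<phi>s n x) \<le> \<epsilon>"
proof -
  define K where "K = (\<Sum>k\<in>UNIV. M / GS_weight s t h ((\<lambda>_. 0)(k := 2)) ((\<lambda>_. 0) :: 'n mindex))"
  have decay: "(x$i)\<^sup>2 * norm (\<phi>s n x) \<le> K" for n x i
    using GS_term_le_imp_decay[OF step_pos step_bound[of n x _ "\<lambda>_. 0"], where \<alpha> = "\<lambda>_. 0" and i = i]
    by (simp add: K_def mult.commute numeral_2_eq_2)
  show ?thesis
  proof (rule that)
    fix n and x :: "real^'n" and i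
    assume "max 1 (K / \<epsilon>) \<le> \<bar>x$i\<bar>"
    with decay[of x i n] \<open>\<epsilon> > 0\<close> show "norm (\<phi>s n x) \<le> \<epsilon>"
      by (intro le_of_mult_square_le[of "norm (\<phi>s n x)" "x$i" K]) (simp_all add: mult.commute)
  qed
qed

lemma uniformly_Cauchy_seq: "uniformly_Cauchy_on UNIV \<phi>s"
proof (rule uniformly_Cauchy_onI)
  fix e :: real assume "e > 0"
  then obtain R where R: "\<And>n x i. R \<le> \<bar>x$i\<bar> \<Longrightarrow> norm (\<phi>s n x) \<le> e / 3"
    using small_outside_box[of "e / 3"] by auto
  define B where "B = (\<Sum>j\<in>(UNIV :: 'n set). M / GS_weight s t h (\<lambda>_. 0) (mi_inc (\<lambda>_. 0) j))"
  have first_partials: "norm (Dpart (mi_inc (\<lambda>_. 0) j) (\<phi>s n) y) \<le> B" for j n y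
    using Dpart_bound unfolding B_def
    by (rule order_trans, intro member_le_sum[where f = "\<lambda>j. M / GS_weight s t h (\<lambda>_. 0) (mi_inc (\<lambda>_. 0) j)"])
      (auto intro!: divide_nonneg_pos GS_weight_pos step_pos M_nonneg)
  have "dist (\<phi>s n x) (\<phi>s n y) \<le> (real CARD('n) * B) * dist x y" for n x y
    unfolding dist_norm by (rule smooth_fun_Lipschitz[OF smooth_fun_seq first_partials])
  then have "uniformly_Cauchy_on (cbox (\<chi> i. - R) (\<chi> i. R)) \<phi>s"
    by (intro uniformly_Cauchy_on_compact_Lipschitz compact_cbox pointwise)
  then obtain N where
    N: "\<And>x m n. x \<in> cbox (\<chi> i. - R) (\<chi> i. R) \<Longrightarrow> m \<ge> N \<Longrightarrow> n \<ge> N \<Longrightarrow> dist (\<phi>s m x) (\<phi>s n x) < e"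
    using \<open>e > 0\<close> unfolding uniformly_Cauchy_on_def by meson
  show "\<exists>N. \<forall>x\<in>UNIV. \<forall>m\<ge>N. \<forall>n\<ge>N. dist (\<phi>s m x) (\<phi>s n x) < e"
  proof (intro exI ballI allI impI)
    fix x :: "real^'n" and m n assume "m \<ge> N" "n \<ge> N"
    show "dist (\<phi>s m x) (\<phi>s n x) < e"
    proof (cases "x \<in> cbox (\<chi> i. - R) (\<chi> i. R)")
      case True
      then show ?thesis using N \<open>m \<ge> N\<close> \<open>n \<ge> N\<close> by blast
    next
      case False
      then obtain i where "x$i < - R \<or> R < x$i" by (auto simp: mem_box_cart not_le)
      then have "R \<le> \<bar>x$i\<bar>" by arith
      then have "dist (\<phi>s m x) (\<phi>s n x) \<le> e / 3 + e / 3"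
        using R[of x i m] R[of x i n] norm_triangle_ineq4[of "\<phi>s m x" "\<phi>s n x"] by (simp add: dist_norm)
      then show ?thesis using \<open>e > 0\<close> by simp
    qed
  qed
qed

lemma uniformly_Cauchy_Dpart: "uniformly_Cauchy_on UNIV (\<lambda>n. Dpart \<gamma> (\<phi>s n))"
proof (induction "mi_abs \<gamma>" arbitrary: \<gamma>)
  case 0
  then have "\<gamma> = (\<lambda>_. 0)" by (simp add: mi_abs_def fun_eq_iff)
  then show ?case using uniformly_Cauchy_seq by simp
next
  case (Suc k)
  then obtain j where "\<gamma> j > 0" by (metis gr0I mi_abs_def nat.distinct(1) sum.neutral)
  define \<gamma>' where "\<gamma>' = \<gamma>(j := \<gamma> j - 1)"
  have \<gamma>: "mi_inc \<gamma>' j = \<gamma>" using \<open>\<gamma> j > 0\<close> by (auto simp: mi_inc_def \<gamma>'_def fun_eq_iff)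
  then have "uniformly_Cauchy_on UNIV (\<lambda>n. Dpart \<gamma>' (\<phi>s n))"
    using Suc mi_abs_mi_inc[of \<gamma>' j] by simp
  then have "uniformly_Cauchy_on UNIV (\<lambda>n. Dpart (mi_inc \<gamma>' j) (\<phi>s n))"
    by (rule uniformly_Cauchy_on_UNIV_derivative[where v = "axis j 1"])
      (rule Dpart_Taylor_line[OF smooth_fun_seq Dpart_bound])
  then show ?case unfolding \<gamma> .
qed

definition Dpart_lim :: "'n mindex \<Rightarrow> real^'n \<Rightarrow> complex" where
  "Dpart_lim \<gamma> = (\<lambda>x. lim (\<lambda>n. Dpart \<gamma> (\<phi>s n) x))"

lemma uniform_limit_Dpart: "uniform_limit UNIV (\<lambda>n. Dpart \<gamma> (\<phi>s n)) (Dpart_lim \<gamma>) sequentially"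
  unfolding Dpart_lim_def uniformly_convergent_uniform_limit_iff[symmetric]
  by (rule Cauchy_uniformly_convergent[OF uniformly_Cauchy_Dpart])

lemma Dpart_lim_has_derivative:
  "(Dpart_lim \<gamma> has_derivative (\<lambda>v. \<Sum>j\<in>UNIV. of_real (v$j) * Dpart_lim (mi_inc \<gamma> j) x)) (at x)"
proof -
  have unif: "\<forall>\<^sub>F n in sequentially. \<forall>x\<in>UNIV. \<forall>v. norm ((\<Sum>j\<in>UNIV. of_real (v$j) * Dpart (mi_inc \<gamma> j) (\<phi>s n) x)
      - (\<Sum>j\<in>UNIV. of_real (v$j) * Dpart_lim (mi_inc \<gamma> j) x)) \<le> e * norm v" if "e > 0" for e
  proof -
    have "e / CARD('n) > 0" using \<open>e > 0\<close> by simp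
    then have "\<forall>\<^sub>F n in sequentially. \<forall>x. dist (Dpart (mi_inc \<gamma> j) (\<phi>s n) x) (Dpart_lim (mi_inc \<gamma> j) x) < e / CARD('n)" for j
      using uniform_limitD[OF uniform_limit_Dpart] by simp
    then have "\<forall>\<^sub>F n in sequentially. \<forall>j. \<forall>x. dist (Dpart (mi_inc \<gamma> j) (\<phi>s n) x) (Dpart_lim (mi_inc \<gamma> j) x) < e / CARD('n)"
      by (rule eventually_all_finite)
    then show ?thesis
    proof eventually_elim
      case (elim n)
      have "norm (\<Sum>j\<in>UNIV. of_real (v$j) * (Dpart (mi_inc \<gamma> j) (\<phi>s n) x - Dpart_lim (mi_inc \<gamma> j) x))
          \<le> real CARD('n) * (e / CARD('n)) * norm v" for x v
        using elim by (intro norm_sum_of_real_component_le) (simp add: dist_norm less_imp_le)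
      then show ?case by (simp add: algebra_simps sum_subtractf[symmetric])
    qed
  qed
  have "\<exists>g. \<forall>x\<in>UNIV. (\<lambda>n. Dpart \<gamma> (\<phi>s n) x) \<longlonglongrightarrow> g x \<and>
      (g has_derivative (\<lambda>v. \<Sum>j\<in>UNIV. of_real (v$j) * Dpart_lim (mi_inc \<gamma> j) x)) (at x within UNIV)"
    by (rule has_derivative_sequence[OF convex_UNIV _ unif UNIV_I tendsto_uniform_limitI[OF uniform_limit_Dpart UNIV_I]])
      (simp add: Dpart_has_derivative[OF smooth_fun_seq])
  then obtain g where "\<And>x. (\<lambda>n. Dpart \<gamma> (\<phi>s n) x) \<longlonglongrightarrow> g x"
    and "\<And>x. (g has_derivative (\<lambda>v. \<Sum>j\<in>UNIV. of_real (v$j) * Dpart_lim (mi_inc \<gamma> j) x)) (at x)"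
    by auto
  moreover have "g = Dpart_lim \<gamma>"
    using LIMSEQ_unique[OF calculation(1) tendsto_uniform_limitI[OF uniform_limit_Dpart UNIV_I]] by blast
  ultimately show ?thesis by simp
qed

definition lim_fun :: "real^'n \<Rightarrow> complex" where
  "lim_fun = Dpart_lim (\<lambda>_. 0)"

lemma Dpart_lim_fun: "Dpart \<beta> lim_fun = Dpart_lim \<beta>"
proof -
  have "pder j (Dpart_lim \<gamma>) = Dpart_lim (mi_inc \<gamma> j)" for j \<gamma>
    by (rule ext) (simp add: pder_eq_derivative[OF Dpart_lim_has_derivative])
  then show ?thesis using Dpart_pder_closed_family[of Dpart_lim \<beta> "\<lambda>_. 0"] by (simp add: lim_fun_def)
qed

lemma smooth_lim_fun: "smooth_fun lim_fun"
  unfolding smooth_fun_def Dpart_lim_fun differentiable_def using Dpart_lim_has_derivative by blast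

lemma GS_term_lim_fun_le: "GS_term s t h lim_fun x \<alpha> \<beta> \<le> M"
proof (rule LIMSEQ_le_const2)
  show "(\<lambda>n. GS_term s t h (\<phi>s n) x \<alpha> \<beta>) \<longlonglongrightarrow> GS_term s t h lim_fun x \<alpha> \<beta>"
    unfolding GS_term_eq_weight Dpart_lim_fun by (intro tendsto_intros tendsto_uniform_limitI[OF uniform_limit_Dpart UNIV_I])
qed (use step_bound in blast)

lemma lim_fun_in_GS: "lim_fun \<in> GS s t"
  using GS_term_lim_fun_le by (intro GS_memI[OF smooth_lim_fun step_pos]) (auto simp: GS_finite_def)

lemma GS_converges_seq: "GS_converges s t \<phi>s"
proof (rule GS_convergesI[OF lim_fun_in_GS GS])
  let ?\<theta> = "\<lambda>n x. \<phi>s n x - lim_fun x"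
  have bound: "GS_term s t h (?\<theta> n) x \<alpha> \<beta> \<le> 2 * M" for n x \<alpha> \<beta>
    using GS_term_diff_le[OF smooth_fun_seq smooth_lim_fun, of h s t n x \<alpha> \<beta>] step_pos step_bound[of n x \<alpha> \<beta>]
      GS_term_lim_fun_le[of x \<alpha> \<beta>] by simp
  have "uniform_limit UNIV (\<lambda>n. Dpart \<beta> (?\<theta> n)) (\<lambda>_. 0) sequentially" for \<beta>
    using uniform_limit_Dpart[of \<beta>]
    by (simp add: uniform_limit_iff Dpart_lincomb(1)[OF smooth_fun_seq smooth_lim_fun, where a = 1 and b = "-1", simplified] Dpart_lim_fun dist_norm)
  then have each: "\<forall>\<^sub>F n in sequentially. \<forall>x. GS_term s t h (?\<theta> n) x \<alpha> \<beta> \<le> \<epsilon>" if "\<epsilon> > 0" for \<alpha> \<beta> \<epsilon>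
    using eventually_GS_term_le_of_uniform_limit[where \<theta> = ?\<theta>, OF step_pos bound] that by blast
  show "\<forall>\<^sub>F n in sequentially. \<forall>x \<alpha> \<beta>. GS_term s t (h / 2) (?\<theta> n) x \<alpha> \<beta> \<le> \<epsilon>" if "\<epsilon> > 0" for \<epsilon>
    by (rule eventually_GS_term_half_step_le[where \<theta> = ?\<theta>, OF step_pos bound that each[OF that]])
qed (use step_pos in simp)

end

theorem lemma4p2:
  fixes s t :: real and \<phi>s :: "nat \<Rightarrow> real^'n::finite \<Rightarrow> complex"
  assumes "s \<ge> 0" and "t \<ge> 0" and "\<And>n. \<phi>s n \<in> GS s t"
  shows "GS_converges s t \<phi>s \<longleftrightarrow>
           (GS_bounded s t \<phi>s \<and> (\<forall>x. convergent (\<lambda>n. \<phi>s n x)))"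
proof
  assume "GS_converges s t \<phi>s"
  then show "GS_bounded s t \<phi>s \<and> (\<forall>x. convergent (\<lambda>n. \<phi>s n x))"
    using GS_converges_imp_bounded[of \<phi>s, OF assms(3)] GS_converges_imp_convergent by blast
next
  assume bounded_pointwise: "GS_bounded s t \<phi>s \<and> (\<forall>x. convergent (\<lambda>n. \<phi>s n x))"
  then obtain h M where "h > 0" "\<And>n x \<alpha> \<beta>. GS_term s t h (\<phi>s n) x \<alpha> \<beta> \<le> M"
    using GS_bounded_imp_step_bounded[of \<phi>s, OF assms(3)] by blast
  then interpret GS_step_bounded_pointwise_convergent s t \<phi>s h M
    using assms(3) bounded_pointwise by unfold_locales auto
  show "GS_converges s t \<phi>s" by (rule GS_converges_seq)
qed

end
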